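(* Let $G_{\mathrm{vc}}$ be a vertex-capacitated graph with node-weighting $A_{\mathrm{vc}}$, and $G_{\mathrm{ec}}$ the corresponding directed edge-capacitated graph with node-weighting $A_{\mathrm{ec}}$. Then: (1) If there is an $h\cdot s$-length moving cut $C$ of $G_{\mathrm{vc}}$ with $\mathrm{spars}_{(h,s)}(C,A_{\mathrm{vc}})<\phi$, then there exists an $h\cdot s$-length moving cut $C'$ of $G_{\mathrm{ec}}$ with $\mathrm{spars}_{(h,s)}(C',A_{\mathrm{ec}})<3\phi$. (2) If there is an $h\cdot s$-length moving cut $C'$ of $G_{\mathrm{ec}}$ with $\mathrm{spars}_{(h,s)}(C',A_{\mathrm{ec}})<\phi$, then there exists an $h\cdot s$-length moving cut $C$ of $G_{\mathrm{vc}}$ with $\mathrm{spars}_{(h,s)}(C,A_{\mathrm{vc}})<\phi$.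
   Context: Vertex-capacitated graph: finite undirected graph with positive integer lengths $\ell$ and capacities $u$ on vertices and edges; path length sums vertex and edge lengths. Corresponding directed graph $G_{\mathrm{ec}}$: for each vertex $v$, vertices $v_{\mathrm{in}},v_{\mathrm{mid}},v_{\mathrm{out}}$ and directed edges $(v_{\mathrm{in}},v_{\mathrm{mid}}),(v_{\mathrm{mid}},v_{\mathrm{out}}),(v_{\mathrm{in}},v_{\mathrm{out}})$ of length $\ell(v)$, capacity $u(v)$; for each edge $e=\{u,v\}$, directed edges $(u_{\mathrm{out}},v_{\mathrm{in}}),(v_{\mathrm{out}},u_{\mathrm{in}})$ of length $\ell(e)$, capacity $u(e)$; $A_{\mathrm{ec}}(v_{\mathrm{mid}})=A_{\mathrm{vc}}(v)$, zero elsewhere. General notions: demand $D\ge0$ on ordered pairs; $A$-respecting: $\max\{\sum_wD(v,w),\sum_wD(w,v)\}\le A(v)$; $h$-length: $D(v,w)>0\Rightarrow\mathrm{dist}(v,w)\le h$; symmetric: $D(v,w)=D(w,v)$. An $H$-length moving cut assigns each edge (and in $G_{\mathrm{vc}}$ also each vertex) $x$ a value $C(x)\in\{0,\tfrac1H,\dots\}\cap[0,1]$; $|C|=\sum_xu(x)C(x)$; $G-C$ has lengths $\ell(x)+H\cdot C(x)$; $\mathrm{sep}_{h'}(C,D)=\sum_{(u,v):\mathrm{dist}_{G-C}(u,v)>h'}D(u,v)$; $\mathrm{spars}_{h'}(C,D)=|C|/\mathrm{sep}_{h'}(C,D)$. For an $hs$-length cut $C$, $\mathrm{spars}_{(h,s)}(C,A)=\min\mathrm{spars}_{hs}(C,D)$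 over $A$-respecting $h$-length demands $D$, which in the directed graph $G_{\mathrm{ec}}$ are additionally required to be symmetric (zero separation counts as $+\infty$). *)

theory Defs
  imports Complex_Main "HOL-Library.Extended_Real"
begin

definition cut_val :: "nat \<Rightarrow> real \<Rightarrow> bool" where
  "cut_val H c \<longleftrightarrow> (\<exists>k::nat. c = real k / real H) \<and> 0 \<le> c \<and> c \<le> 1"

definition demand_ok ::
  "'w set \<Rightarrow> ('w \<Rightarrow> 'w \<Rightarrow> ereal) \<Rightarrow> ('w \<Rightarrow> real) \<Rightarrow> nat \<Rightarrow> ('w \<Rightarrow> 'w \<Rightarrow> real) \<Rightarrow> bool" where
  "demand_ok W d A h D \<longleftrightarrow>
     (\<forall>v w. 0 \<le> D v w) \<and>
     (\<forall>v w. (v \<notin> W \<or> w \<notin> W) \<longrightarrow> D v w = 0) \<and>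
     (\<forall>v\<in>W. max (\<Sum>w\<in>W. D v w) (\<Sum>w\<in>W. D w v) \<le> A v) \<and>
     (\<forall>v w. D v w > 0 \<longrightarrow> d v w \<le> ereal (real h))"

definition symmetric_demand :: "('w \<Rightarrow> 'w \<Rightarrow> real) \<Rightarrow> bool" where
  "symmetric_demand D \<longleftrightarrow> (\<forall>v w. D v w = D w v)"

text \<open>sep_{h'}(C,D), where distC is the distance in G - C.\<close>
definition sep :: "'w set \<Rightarrow> ('w \<Rightarrow> 'w \<Rightarrow> ereal) \<Rightarrow> nat \<Rightarrow> ('w \<Rightarrow> 'w \<Rightarrow> real) \<Rightarrow> real" where
  "sep W distC h' D = (\<Sum>p\<in>W \<times> W. if distC (fst p) (snd p) > ereal (real h') then D (fst p) (snd p) else 0)"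

definition spars_val :: "real \<Rightarrow> real \<Rightarrow> ereal" where
  "spars_val csize sepv = (if sepv = 0 then \<infinity> else ereal (csize / sepv))"

definition vc_graph ::
  "'v set \<Rightarrow> 'v set set \<Rightarrow> ('v \<Rightarrow> nat) \<Rightarrow> ('v set \<Rightarrow> nat) \<Rightarrow> ('v \<Rightarrow> nat) \<Rightarrow> ('v set \<Rightarrow> nat)
   \<Rightarrow> ('v \<Rightarrow> real) \<Rightarrow> bool" where
  "vc_graph V E lv le uv ue A \<longleftrightarrow>
     finite V \<and> (\<forall>e\<in>E. \<exists>a b. a \<in> V \<and> b \<in> V \<and> a \<noteq> b \<and> e = {a, b}) \<and>
     (\<forall>v\<in>V. lv v > 0 \<and> uv v > 0) \<and> (\<forall>e\<in>E. le e > 0 \<and> ue e > 0) \<and>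
     (\<forall>v\<in>V. A v \<ge> 0)"

definition vc_path :: "'v set \<Rightarrow> 'v set set \<Rightarrow> 'v list \<Rightarrow> bool" where
  "vc_path V E p \<longleftrightarrow> p \<noteq> [] \<and> distinct p \<and> set p \<subseteq> V \<and>
     (\<forall>i. i + 1 < length p \<longrightarrow> {p ! i, p ! (i + 1)} \<in> E)"

definition vc_len :: "('v \<Rightarrow> real) \<Rightarrow> ('v set \<Rightarrow> real) \<Rightarrow> 'v list \<Rightarrow> real" where
  "vc_len lv le p = (\<Sum>i<length p. lv (p ! i)) + (\<Sum>i<length p - 1. le {p ! i, p ! (i + 1)})"

definition vc_dist :: "'v set \<Rightarrow> 'v set set \<Rightarrow> ('v \<Rightarrow> real) \<Rightarrow> ('v set \<Rightarrow> real) \<Rightarrow> 'v \<Rightarrow> 'v \<Rightarrow> ereal" where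
  "vc_dist V E lv le v w =
     (if v = w then 0
      else (INF p \<in> {p. vc_path V E p \<and> hd p = v \<and> last p = w}. ereal (vc_len lv le p)))"

definition vc_cut :: "nat \<Rightarrow> 'v set \<Rightarrow> 'v set set \<Rightarrow> ('v \<Rightarrow> real) \<Rightarrow> ('v set \<Rightarrow> real) \<Rightarrow> bool" where
  "vc_cut H V E Cv Ce \<longleftrightarrow> (\<forall>v\<in>V. cut_val H (Cv v)) \<and> (\<forall>e\<in>E. cut_val H (Ce e))"

definition vc_cut_size ::
  "'v set \<Rightarrow> 'v set set \<Rightarrow> ('v \<Rightarrow> nat) \<Rightarrow> ('v set \<Rightarrow> nat) \<Rightarrow> ('v \<Rightarrow> real) \<Rightarrow> ('v set \<Rightarrow> real) \<Rightarrow> real" where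
  "vc_cut_size V E uv ue Cv Ce = (\<Sum>v\<in>V. real (uv v) * Cv v) + (\<Sum>e\<in>E. real (ue e) * Ce e)"

definition vc_spars ::
  "nat \<Rightarrow> nat \<Rightarrow> 'v set \<Rightarrow> 'v set set \<Rightarrow> ('v \<Rightarrow> nat) \<Rightarrow> ('v set \<Rightarrow> nat) \<Rightarrow> ('v \<Rightarrow> nat) \<Rightarrow> ('v set \<Rightarrow> nat)
   \<Rightarrow> ('v \<Rightarrow> real) \<Rightarrow> ('v set \<Rightarrow> real) \<Rightarrow> ('v \<Rightarrow> real) \<Rightarrow> ereal" where
  "vc_spars h s V E lv le uv ue Cv Ce A =
     (let dist0 = vc_dist V E (\<lambda>v. real (lv v)) (\<lambda>e. real (le e));
          distC = vc_dist V E (\<lambda>v. real (lv v) + real (h * s) * Cv v) (\<lambda>e. real (le e) + real (h * s) * Ce e)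
      in INF D \<in> {D. demand_ok V dist0 A h D}.
           spars_val (vc_cut_size V E uv ue Cv Ce) (sep V distC (h * s) D))"

datatype tag = In | Mid | Out

definition ec_vertices :: "'v set \<Rightarrow> ('v \<times> tag) set" where
  "ec_vertices V = V \<times> UNIV"

definition ec_arcs :: "'v set \<Rightarrow> 'v set set \<Rightarrow> (('v \<times> tag) \<times> ('v \<times> tag)) set" where
  "ec_arcs V E =
     {((v, In), (v, Mid)) | v. v \<in> V} \<union> {((v, Mid), (v, Out)) | v. v \<in> V} \<union>
     {((v, In), (v, Out)) | v. v \<in> V} \<union>
     {((a, Out), (b, In)) | a b. {a, b} \<in> E \<and> a \<noteq> b}"

text \<open>Length (resp. capacity) of an arc: internal arcs of v get the value of v,
  the arcs of an edge {a,b} get the value of that edge.\<close>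
definition ec_weight :: "('v \<Rightarrow> 'a) \<Rightarrow> ('v set \<Rightarrow> 'a) \<Rightarrow> ('v \<times> tag) \<times> ('v \<times> tag) \<Rightarrow> 'a" where
  "ec_weight fv fe x = (if fst (fst x) = fst (snd x) then fv (fst (fst x)) else fe {fst (fst x), fst (snd x)})"

definition ec_A :: "('v \<Rightarrow> real) \<Rightarrow> 'v \<times> tag \<Rightarrow> real" where
  "ec_A A x = (if snd x = Mid then A (fst x) else 0)"

definition di_path :: "'w set \<Rightarrow> ('w \<times> 'w) set \<Rightarrow> 'w list \<Rightarrow> bool" where
  "di_path W F p \<longleftrightarrow> p \<noteq> [] \<and> distinct p \<and> set p \<subseteq> W \<and>
     (\<forall>i. i + 1 < length p \<longrightarrow> (p ! i, p ! (i + 1)) \<in> F)"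

definition di_len :: "('w \<times> 'w \<Rightarrow> real) \<Rightarrow> 'w list \<Rightarrow> real" where
  "di_len len p = (\<Sum>i<length p - 1. len (p ! i, p ! (i + 1)))"

definition di_dist :: "'w set \<Rightarrow> ('w \<times> 'w) set \<Rightarrow> ('w \<times> 'w \<Rightarrow> real) \<Rightarrow> 'w \<Rightarrow> 'w \<Rightarrow> ereal" where
  "di_dist W F len v w = (INF p \<in> {p. di_path W F p \<and> hd p = v \<and> last p = w}. ereal (di_len len p))"

definition ec_cut :: "nat \<Rightarrow> 'v set \<Rightarrow> 'v set set \<Rightarrow> (('v \<times> tag) \<times> ('v \<times> tag) \<Rightarrow> real) \<Rightarrow> bool" where
  "ec_cut H V E C \<longleftrightarrow> (\<forall>x\<in>ec_arcs V E. cut_val H (C x))"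

definition ec_cut_size ::
  "'v set \<Rightarrow> 'v set set \<Rightarrow> ('v \<Rightarrow> nat) \<Rightarrow> ('v set \<Rightarrow> nat) \<Rightarrow> (('v \<times> tag) \<times> ('v \<times> tag) \<Rightarrow> real) \<Rightarrow> real" where
  "ec_cut_size V E uv ue C = (\<Sum>x\<in>ec_arcs V E. real (ec_weight uv ue x) * C x)"

definition ec_spars ::
  "nat \<Rightarrow> nat \<Rightarrow> 'v set \<Rightarrow> 'v set set \<Rightarrow> ('v \<Rightarrow> nat) \<Rightarrow> ('v set \<Rightarrow> nat) \<Rightarrow> ('v \<Rightarrow> nat) \<Rightarrow> ('v set \<Rightarrow> nat)
   \<Rightarrow> (('v \<times> tag) \<times> ('v \<times> tag) \<Rightarrow> real) \<Rightarrow> ('v \<Rightarrow> real) \<Rightarrow> ereal" where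
  "ec_spars h s V E lv le uv ue C A =
     (let W = ec_vertices V; F = ec_arcs V E;
          dist0 = di_dist W F (\<lambda>x. real (ec_weight lv le x));
          distC = di_dist W F (\<lambda>x. real (ec_weight lv le x) + real (h * s) * C x)
      in INF D \<in> {D. demand_ok W dist0 (ec_A A) h D \<and> symmetric_demand D}.
           spars_val (ec_cut_size V E uv ue C) (sep W distC (h * s) D))"

end

theory Submission
  imports Defs
begin

text \<open>
  Paths of \<open>G_vc\<close> correspond to walks between the \<open>Mid\<close> copies in \<open>G_ec\<close>: a vertex is
  crossed by the arc \<open>In \<rightarrow> Out\<close> (or by \<open>In \<rightarrow> Mid \<rightarrow> Out\<close>) and an edge by an arc
  \<open>Out \<rightarrow> In\<close>. Hence, when every arc carries the length of its vertex or edge, distances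
  between \<open>Mid\<close> copies in \<open>G_ec\<close> are exactly the distances of \<open>G_vc\<close>.

  (1) Putting the value of a vertex on its three arcs and the value of an edge on its two arcs
  turns \<open>C\<close> into a cut of size at most \<open>3 |C|\<close> with the same distances. A demand of \<open>G_vc\<close>,
  symmetrised (free, since distances in \<open>G_vc\<close> are symmetric) and placed on the \<open>Mid\<close> copies,
  is admissible for \<open>G_ec\<close> and separated by the same amount.

  (2) Since \<open>A_ec\<close> vanishes outside the \<open>Mid\<close> copies, a symmetric \<open>A_ec\<close>-respecting demand
  lives on them. Giving each vertex and each edge the maximum of \<open>C'\<close> over its arcs yields a
  cut of no larger size whose lengths dominate those of \<open>G_ec - C'\<close>, so the demand read off
  on the \<open>Mid\<close> copies is separated at least as much.
\<close>

section \<open>Paths\<close>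

lemma di_path_iff_successively:
  "di_path W F p \<longleftrightarrow> p \<noteq> [] \<and> distinct p \<and> set p \<subseteq> W \<and> successively (\<lambda>x y. (x, y) \<in> F) p"
  by (simp add: di_path_def successively_conv_nth)

lemma vc_path_iff_successively:
  "vc_path V E p \<longleftrightarrow> p \<noteq> [] \<and> distinct p \<and> set p \<subseteq> V \<and> successively (\<lambda>x y. {x, y} \<in> E) p"
  by (simp add: vc_path_def successively_conv_nth)

lemma di_path_singleton [simp]: "di_path W F [a] \<longleftrightarrow> a \<in> W"
  by (simp add: di_path_iff_successively)

lemma di_path_Cons_Cons:
  "di_path W F (a # b # ps) \<longleftrightarrow> a \<in> W \<and> (a, b) \<in> F \<and> a \<notin> set (b # ps) \<and> di_path W F (b # ps)"
  by (auto simp: di_path_iff_successively)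

lemma vc_path_Nil [simp]: "\<not> vc_path V E []"
  by (simp add: vc_path_def)

lemma vc_path_singleton [simp]: "vc_path V E [a] \<longleftrightarrow> a \<in> V"
  by (simp add: vc_path_iff_successively)

lemma vc_path_Cons_Cons:
  "vc_path V E (a # b # ps) \<longleftrightarrow> a \<in> V \<and> {a, b} \<in> E \<and> a \<notin> set (b # ps) \<and> vc_path V E (b # ps)"
  by (auto simp: vc_path_iff_successively)

lemma vc_path_rev: "vc_path V E p \<Longrightarrow> vc_path V E (rev p)"
  by (simp add: vc_path_iff_successively insert_commute)

lemma di_len_singleton [simp]: "di_len len [a] = 0"
  by (simp add: di_len_def)

lemma di_len_Cons_Cons [simp]: "di_len len (a # b # ps) = len (a, b) + di_len len (b # ps)"
  unfolding di_len_def by (simp del: sum.lessThan_Suc add: sum.lessThan_Suc_shift)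

lemma di_path_appendD: "di_path W F (xs @ ys) \<Longrightarrow> ys \<noteq> [] \<Longrightarrow> di_path W F ys"
  by (auto simp: di_path_iff_successively successively_append_iff)

lemma di_len_append_Cons:
  "di_len len (xs @ b # ys) = di_len len (xs @ [b]) + di_len len (b # ys)"
proof (induction xs)
  case (Cons a xs)
  then show ?case
    by (cases xs) simp_all
qed simp

lemma di_len_nonneg:
  assumes "di_path W F q" and "\<And>x. x \<in> F \<Longrightarrow> 0 \<le> len x"
  shows "0 \<le> di_len len q"
  using assms unfolding di_path_def di_len_def by (intro sum_nonneg) auto

lemma vc_len_singleton [simp]: "vc_len lv le [a] = lv a"
  by (simp add: vc_len_def)

lemma vc_len_Cons_Cons [simp]: "vc_len lv le (a # b # ps) = lv a + le {a, b} + vc_len lv le (b # ps)"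
  unfolding vc_len_def by (simp del: sum.lessThan_Suc add: sum.lessThan_Suc_shift)

lemma vc_len_rev: "vc_len lv le (rev p) = vc_len lv le p"
proof -
  let ?n = "length p"
  have "(\<Sum>i<?n. lv (rev p ! i)) = (\<Sum>i<?n. lv (p ! (?n - Suc i)))"
    by (intro sum.cong) (auto simp: rev_nth)
  also have "\<dots> = (\<Sum>i<?n. lv (p ! i))"
    by (rule sum.nat_diff_reindex)
  finally have vertices: "(\<Sum>i<?n. lv (rev p ! i)) = (\<Sum>i<?n. lv (p ! i))" .
  let ?m = "?n - 1"
  have "(\<Sum>i<?m. le {rev p ! i, rev p ! (i + 1)}) = (\<Sum>i<?m. le {p ! (?m - Suc i), p ! (?m - Suc i + 1)})"
  proof (intro sum.cong refl)
    fix i assume "i \<in> {..<?m}"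
    then have "rev p ! i = p ! (?m - Suc i + 1)" and "rev p ! (i + 1) = p ! (?m - Suc i)"
      by (auto simp: rev_nth Suc_diff_Suc)
    then show "le {rev p ! i, rev p ! (i + 1)} = le {p ! (?m - Suc i), p ! (?m - Suc i + 1)}"
      by (simp add: insert_commute)
  qed
  also have "\<dots> = (\<Sum>i<?m. le {p ! i, p ! (i + 1)})"
    by (rule sum.nat_diff_reindex[where g = "\<lambda>j. le {p ! j, p ! (j + 1)}"])
  finally show ?thesis
    using vertices by (simp add: vc_len_def)
qed

lemma vc_dist_refl [simp]: "vc_dist V E lv le v v = 0"
  by (simp add: vc_dist_def)

lemma vc_dist_commute: "vc_dist V E lv le v w = vc_dist V E lv le w v"
proof -
  have "{p. vc_path V E p \<and> hd p = v \<and> last p = w} = rev ` {p. vc_path V E p \<and> hd p = w \<and> last p = v}"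
    by (force simp: hd_rev last_rev vc_path_rev intro: rev_image_eqI[where x = "rev p" for p])
  then show ?thesis
    by (simp add: vc_dist_def image_comp comp_def vc_len_rev)
qed

section \<open>The split graph\<close>

lemma ec_vertices_iff [simp]: "(x, t) \<in> ec_vertices V \<longleftrightarrow> x \<in> V"
  by (simp add: ec_vertices_def)

lemma UNIV_tag: "(UNIV :: tag set) = {In, Mid, Out}"
  using tag.exhaust by auto

lemma finite_ec_vertices: "finite V \<Longrightarrow> finite (ec_vertices V)"
  by (simp add: ec_vertices_def UNIV_tag)

lemma ec_arcs_intros:
  "x \<in> V \<Longrightarrow> ((x, In), (x, Mid)) \<in> ec_arcs V E"
  "x \<in> V \<Longrightarrow> ((x, Mid), (x, Out)) \<in> ec_arcs V E"
  "x \<in> V \<Longrightarrow> ((x, In), (x, Out)) \<in> ec_arcs V E"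
  "{x, y} \<in> E \<Longrightarrow> x \<noteq> y \<Longrightarrow> ((x, Out), (y, In)) \<in> ec_arcs V E"
  by (auto simp: ec_arcs_def)

lemma ec_arc_from_In: "((x, In), z) \<in> ec_arcs V E \<Longrightarrow> z = (x, Mid) \<or> z = (x, Out)"
  by (auto simp: ec_arcs_def)

lemma ec_arc_from_Mid: "((x, Mid), z) \<in> ec_arcs V E \<Longrightarrow> z = (x, Out)"
  by (auto simp: ec_arcs_def)

lemma ec_arc_from_Out: "((x, Out), z) \<in> ec_arcs V E \<Longrightarrow> \<exists>y. z = (y, In) \<and> {x, y} \<in> E \<and> x \<noteq> y"
  by (auto simp: ec_arcs_def)

lemma ec_weight_internal [simp]: "ec_weight f g ((x, t), (x, t')) = f x"
  by (simp add: ec_weight_def)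

lemma ec_weight_external [simp]: "x \<noteq> y \<Longrightarrow> ec_weight f g ((x, t), (y, t')) = g {x, y}"
  by (simp add: ec_weight_def)

lemma ec_weight_nonneg:
  assumes "x \<in> ec_arcs V E" and "\<forall>v\<in>V. 0 \<le> f v" and "\<forall>e\<in>E. 0 \<le> g e"
  shows "0 \<le> ec_weight f g x"
  using assms by (auto simp: ec_arcs_def)

lemma ec_weight_cut_length:
  "ec_weight (\<lambda>v. real (lv v) + c * Cv v) (\<lambda>e. real (le e) + c * Ce e) x
    = real (ec_weight lv le x) + c * ec_weight Cv Ce x"
  by (simp add: ec_weight_def)

section \<open>Distances between \<open>Mid\<close> copies\<close>

fun ec_path :: "tag \<Rightarrow> 'v list \<Rightarrow> ('v \<times> tag) list" where
  "ec_path t [] = []"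
| "ec_path t [x] = (if t = Mid then [(x, Mid)] else [(x, t), (x, Mid)])"
| "ec_path t (x # y # ps) = (x, t) # (x, Out) # ec_path In (y # ps)"

lemma ec_path_eq_Nil_iff [simp]: "ec_path t p = [] \<longleftrightarrow> p = []"
  by (induction t p rule: ec_path.induct) auto

lemma ec_path_hd: "p \<noteq> [] \<Longrightarrow> hd (ec_path t p) = (hd p, t)"
  by (induction t p rule: ec_path.induct) auto

lemma ec_path_last: "p \<noteq> [] \<Longrightarrow> last (ec_path t p) = (last p, Mid)"
  by (induction t p rule: ec_path.induct) (auto simp: ec_path_hd)

lemma ec_path_vertices: "fst ` set (ec_path t p) \<subseteq> set p"
  by (induction t p rule: ec_path.induct) auto

lemma di_path_ec_path:
  assumes "vc_path V E p" and "t \<noteq> Out"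
  shows "di_path (ec_vertices V) (ec_arcs V E) (ec_path t p)"
  using assms
proof (induction t p rule: ec_path.induct)
  case (2 t x)
  then show ?case
    by (cases t) (auto simp: di_path_Cons_Cons intro: ec_arcs_intros)
next
  case (3 t x y ps)
  then have "x \<in> V" "{x, y} \<in> E" "x \<notin> set (y # ps)" "vc_path V E (y # ps)"
    by (simp_all add: vc_path_Cons_Cons)
  moreover obtain r where "ec_path In (y # ps) = (y, In) # r"
    by (cases ps) auto
  moreover have "(x, t) \<notin> set (ec_path In (y # ps))" "(x, Out) \<notin> set (ec_path In (y # ps))"
    using ec_path_vertices[of In "y # ps"] \<open>x \<notin> set (y # ps)\<close> by force+
  ultimately show ?case
    using "3.IH" "3.prems"(2) ec_arcs_intros(4)[of x y E V] ec_arcs_intros(2,3)[of x V E]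
    by (cases t) (simp_all add: di_path_Cons_Cons)
qed simp

lemma di_len_ec_path_le:
  assumes "vc_path V E p" and "t \<noteq> Out" and "\<forall>a\<in>V. 0 \<le> Lv a"
    and "\<And>x. x \<in> ec_arcs V E \<Longrightarrow> len x \<le> ec_weight Lv Le x"
  shows "di_len len (ec_path t p) \<le> vc_len Lv Le p"
  using assms(1,2)
proof (induction t p rule: ec_path.induct)
  case (2 t x)
  then show ?case
    using assms(3) assms(4)[of "((x, In), (x, Mid))"] ec_arcs_intros(1)[of x V E] by (cases t) auto
next
  case (3 t x y ps)
  then have x: "x \<in> V" and xy: "{x, y} \<in> E" "x \<noteq> y" and "vc_path V E (y # ps)"
    by (auto simp: vc_path_Cons_Cons)
  then have IH: "di_len len (ec_path In (y # ps)) \<le> vc_len Lv Le (y # ps)"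
    using "3.IH" by simp
  obtain r where r: "ec_path In (y # ps) = (y, In) # r"
    by (cases ps) auto
  have "len ((x, t), (x, Out)) \<le> Lv x"
    using assms(4) ec_arcs_intros(2,3)[OF x, of E] "3.prems"(2) by (cases t) force+
  moreover have "len ((x, Out), (y, In)) \<le> Le {x, y}"
    using assms(4)[OF ec_arcs_intros(4)[OF xy]] xy by simp
  ultimately show ?case
    using IH r by simp
qed simp

lemma di_dist_Mid_le_vc_dist:
  assumes "v \<in> V" and "\<forall>a\<in>V. 0 \<le> Lv a"
    and "\<And>x. x \<in> ec_arcs V E \<Longrightarrow> len x \<le> ec_weight Lv Le x"
  shows "di_dist (ec_vertices V) (ec_arcs V E) len (v, Mid) (w, Mid) \<le> vc_dist V E Lv Le v w"
proof (cases "v = w")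
  case True
  have "di_dist (ec_vertices V) (ec_arcs V E) len (v, Mid) (v, Mid) \<le> ereal (di_len len [(v, Mid)])"
    unfolding di_dist_def using assms(1) by (intro INF_lower) auto
  then show ?thesis
    using True by (simp add: zero_ereal_def)
next
  case False
  have "di_dist (ec_vertices V) (ec_arcs V E) len (v, Mid) (w, Mid) \<le> ereal (vc_len Lv Le p)"
    if p: "vc_path V E p" "hd p = v" "last p = w" for p
  proof -
    have "p \<noteq> []"
      using p by auto
    then have "di_dist (ec_vertices V) (ec_arcs V E) len (v, Mid) (w, Mid) \<le> ereal (di_len len (ec_path Mid p))"
      unfolding di_dist_def using p
      by (intro INF_lower) (simp add: di_path_ec_path ec_path_hd ec_path_last)
    also have "\<dots> \<le> ereal (vc_len Lv Le p)"
      using di_len_ec_path_le[OF p(1) _ assms(2,3)] by simp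
    finally show ?thesis .
  qed
  then show ?thesis
    using False unfolding vc_dist_def by (auto intro: INF_greatest)
qed

lemma ec_walk_cases:
  assumes q: "di_path (ec_vertices V) (ec_arcs V E) q" "hd q = (x, t)" "last q = (w, Mid)"
    and t: "t \<noteq> Out" and nontrivial: "q \<noteq> [(x, Mid)]"
  obtains (stay) "t = In" "q = [(x, In), (x, Mid)]"
    | (leave) y s where "q = (x, t) # (x, Out) # (y, In) # s" "{x, y} \<in> E" "x \<noteq> y"
    | (detour) y s where "t = In" "q = (x, In) # (x, Mid) # (x, Out) # (y, In) # s" "{x, y} \<in> E" "x \<noteq> y"
proof -
  have exit: "\<exists>y s. r = (y, In) # s \<and> {x, y} \<in> E \<and> x \<noteq> y"
    if "di_path (ec_vertices V) (ec_arcs V E) ((x, Out) # r)" "last ((x, Out) # r) = (w, Mid)" for r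
    using that by (cases r) (auto simp: di_path_Cons_Cons dest: ec_arc_from_Out)
  obtain r where r: "q = (x, t) # r"
    using q(1,2) by (cases q) (auto simp: di_path_def)
  then obtain z r' where r': "r = z # r'"
    using q(3) t nontrivial by (cases r) auto
  have "((x, t), z) \<in> ec_arcs V E" and z_path: "di_path (ec_vertices V) (ec_arcs V E) (z # r')"
    using q(1) r r' by (simp_all add: di_path_Cons_Cons)
  then consider "z = (x, Out)" | "t = In" "z = (x, Mid)"
    using t by (cases t) (auto dest: ec_arc_from_In ec_arc_from_Mid)
  then show thesis
  proof cases
    case 1
    then show thesis
      using exit[of r'] z_path q(3) r r' leave by auto
  next
    case 2
    show thesis
    proof (cases r')
      case Nil
      then show thesis
        using stay 2 r r' by simp
    next
      case (Cons z' r'')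
      then have "z' = (x, Out)"
        using z_path 2 by (auto simp: di_path_Cons_Cons dest: ec_arc_from_Mid)
      then show thesis
        using exit[of r''] z_path q(3) r r' Cons 2 detour by (auto simp: di_path_Cons_Cons)
    qed
  qed
qed

text \<open>
  Decoded paths stay inside the vertices that the walk enters (at \<open>In\<close>) and passes on through
  (via \<open>Mid\<close> or \<open>Out\<close>). A walk that started at a copy of \<open>x\<close> other than \<open>Out\<close> and left
  \<open>x\<close> through \<open>(x, Out)\<close> cannot do both again, so prepending \<open>x\<close> keeps the path simple.
\<close>
definition traversed :: "('v \<times> tag) list \<Rightarrow> 'v set" where
  "traversed q = {a. (a, In) \<in> set q \<and> ((a, Mid) \<in> set q \<or> (a, Out) \<in> set q)}"

lemma traversed_mono: "set q \<subseteq> set q' \<Longrightarrow> traversed q \<subseteq> traversed q'"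
  unfolding traversed_def by blast

lemma hd_traversed:
  assumes "di_path (ec_vertices V) (ec_arcs V E) q" "hd q = (y, In)" "last q = (w, Mid)"
  shows "y \<in> traversed q"
proof (rule ec_walk_cases[OF assms])
  show "q \<noteq> [(y, Mid)]"
    using assms(2) by auto
qed (auto simp: traversed_def)

lemma vc_path_Cons_traversed:
  assumes q: "di_path (ec_vertices V) (ec_arcs V E) (pre @ (x, Out) # (y, In) # s)"
    and "(x, t) \<in> set pre" and "t \<noteq> Out" and "x \<in> V" and xy: "{x, y} \<in> E" "x \<noteq> y"
    and pre_ge: "Lv x \<le> di_len len (pre @ [(x, Out)])"
    and len_ge: "\<And>z. z \<in> ec_arcs V E \<Longrightarrow> ec_weight Lv Le z \<le> len z"
    and p: "vc_path V E p" "hd p = y" "set p \<subseteq> traversed ((y, In) # s)"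
      "vc_len Lv Le p \<le> di_len len ((y, In) # s)"
  shows "vc_path V E (x # p)"
    and "set (x # p) \<subseteq> insert x (traversed (pre @ (x, Out) # (y, In) # s))"
    and "vc_len Lv Le (x # p) \<le> di_len len (pre @ (x, Out) # (y, In) # s)"
proof -
  let ?s = "(y, In) # s"
  have "(x, t) \<notin> set ?s" "(x, Out) \<notin> set ?s"
    using q \<open>(x, t) \<in> set pre\<close> by (auto simp: di_path_def)
  then have "x \<notin> traversed ?s"
    using \<open>t \<noteq> Out\<close> by (cases t) (auto simp: traversed_def)
  then have "x \<notin> set p"
    using p(3) by blast
  moreover obtain ps where p_Cons: "p = y # ps"
    using p(1,2) by (cases p) auto
  ultimately show "vc_path V E (x # p)"
    using p(1) \<open>x \<in> V\<close> xy(1) by (simp add: vc_path_Cons_Cons)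
  have "traversed ?s \<subseteq> traversed (pre @ (x, Out) # ?s)"
    by (intro traversed_mono) auto
  then show "set (x # p) \<subseteq> insert x (traversed (pre @ (x, Out) # ?s))"
    using p(3) by auto
  have "vc_len Lv Le (x # p) = Lv x + Le {x, y} + vc_len Lv Le p"
    by (simp add: p_Cons)
  also have "\<dots> \<le> di_len len (pre @ [(x, Out)]) + len ((x, Out), (y, In)) + di_len len ?s"
    using pre_ge p(4) len_ge[OF ec_arcs_intros(4)[OF xy]] xy(2) by simp
  also have "\<dots> = di_len len (pre @ (x, Out) # ?s)"
    using di_len_append_Cons[of len pre "(x, Out)" ?s] by simp
  finally show "vc_len Lv Le (x # p) \<le> di_len len (pre @ (x, Out) # ?s)" .
qed

lemma ec_walk_decode:
  assumes "di_path (ec_vertices V) (ec_arcs V E) q" "hd q = (x, t)" "last q = (w, Mid)"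
    and "t \<noteq> Out" and "q \<noteq> [(x, Mid)]"
    and Lv_nonneg: "\<forall>a\<in>V. 0 \<le> Lv a"
    and len_ge: "\<And>z. z \<in> ec_arcs V E \<Longrightarrow> ec_weight Lv Le z \<le> len z"
  shows "\<exists>p. vc_path V E p \<and> hd p = x \<and> last p = w \<and> set p \<subseteq> insert x (traversed q)
    \<and> vc_len Lv Le p \<le> di_len len q"
  using assms(1-5)
proof (induction "length q" arbitrary: q x t rule: less_induct)
  case less
  let ?W = "ec_vertices V" and ?F = "ec_arcs V E"
  have x: "x \<in> V"
    using less.prems(1,2) by (cases q) (auto simp: di_path_def)
  have internal_ge: "Lv x \<le> len ((x, t'), (x, t''))" if "((x, t'), (x, t'')) \<in> ?F" for t' t''
    using len_ge[OF that] by simp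
  have exit: "\<exists>p. vc_path V E p \<and> hd p = x \<and> last p = w \<and> set p \<subseteq> insert x (traversed q)
      \<and> vc_len Lv Le p \<le> di_len len q"
    if q: "q = pre @ (x, Out) # (y, In) # s" and "(x, t) \<in> set pre"
      and pre_ge: "Lv x \<le> di_len len (pre @ [(x, Out)])" and xy: "{x, y} \<in> E" "x \<noteq> y"
    for pre y s
  proof -
    let ?s = "(y, In) # s"
    have s_path: "di_path ?W ?F ?s" and s_last: "last ?s = (w, Mid)"
      using less.prems(1,3) q di_path_appendD[of ?W ?F "pre @ [(x, Out)]" ?s] by simp_all
    obtain p where p: "vc_path V E p" "hd p = y" "last p = w"
      and p_set: "set p \<subseteq> insert y (traversed ?s)" and p_len: "vc_len Lv Le p \<le> di_len len ?s"
      using less.hyps[of ?s y In] s_path s_last q by auto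
    have "set p \<subseteq> traversed ?s"
      using p_set hd_traversed[OF s_path _ s_last] by auto
    then show ?thesis
      using vc_path_Cons_traversed[OF _ \<open>(x, t) \<in> set pre\<close> less.prems(4) x xy pre_ge len_ge p(1,2) _ p_len]
        less.prems(1) q p(1,3) by (intro exI[of _ "x # p"]) (auto simp: last_ConsR)
  qed
  from less.prems show ?case
  proof (cases rule: ec_walk_cases)
    case stay
    then show ?thesis
      using x less.prems(3) internal_ge[OF ec_arcs_intros(1)[OF x]] by (intro exI[of _ "[x]"]) auto
  next
    case (leave y s)
    moreover have "Lv x \<le> len ((x, t), (x, Out))"
      using less.prems(4) x by (cases t) (auto intro: internal_ge ec_arcs_intros)
    ultimately show ?thesis
      by (intro exit[of "[(x, t)]"]) auto
  next
    case (detour y s)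
    moreover have "Lv x \<le> len ((x, In), (x, Mid)) + len ((x, Mid), (x, Out))"
      using x Lv_nonneg internal_ge[OF ec_arcs_intros(1)[OF x]] internal_ge[OF ec_arcs_intros(2)[OF x]]
      by force
    ultimately show ?thesis
      by (intro exit[of "[(x, In), (x, Mid)]"]) auto
  qed
qed

lemma vc_dist_le_di_dist_Mid:
  assumes "\<forall>a\<in>V. 0 \<le> Lv a" and "\<forall>e\<in>E. 0 \<le> Le e"
    and len_ge: "\<And>z. z \<in> ec_arcs V E \<Longrightarrow> ec_weight Lv Le z \<le> len z"
  shows "vc_dist V E Lv Le v w \<le> di_dist (ec_vertices V) (ec_arcs V E) len (v, Mid) (w, Mid)"
  unfolding di_dist_def
proof (rule INF_greatest, clarify)
  fix q assume q: "di_path (ec_vertices V) (ec_arcs V E) q" "hd q = (v, Mid)" "last q = (w, Mid)"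
  show "vc_dist V E Lv Le v w \<le> ereal (di_len len q)"
  proof (cases "v = w")
    case True
    have "0 \<le> di_len len q"
      using ec_weight_nonneg[OF _ assms(1,2)] len_ge by (intro di_len_nonneg[OF q(1)]) (meson order_trans)
    then show ?thesis
      using True by simp
  next
    case False
    then have "q \<noteq> [(v, Mid)]"
      using q(3) by auto
    then obtain p where p: "vc_path V E p" "hd p = v" "last p = w" and "vc_len Lv Le p \<le> di_len len q"
      using ec_walk_decode[OF q(1,2,3) _ _ assms(1) len_ge] by auto
    moreover have "vc_dist V E Lv Le v w \<le> ereal (vc_len Lv Le p)"
      unfolding vc_dist_def using False p by (auto intro: INF_lower)
    ultimately show ?thesis
      by (simp add: order_trans)
  qed
qed

lemma di_dist_Mid_eq_vc_dist:
  assumes "v \<in> V" and "\<forall>a\<in>V. 0 \<le> Lv a" and "\<forall>e\<in>E. 0 \<le> Le e"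
  shows "di_dist (ec_vertices V) (ec_arcs V E) (ec_weight Lv Le) (v, Mid) (w, Mid) = vc_dist V E Lv Le v w"
  using assms by (intro antisym di_dist_Mid_le_vc_dist vc_dist_le_di_dist_Mid) auto

section \<open>Cuts\<close>

lemma vc_cut_nonneg:
  assumes "vc_cut H V E Cv Ce"
  shows "\<forall>v\<in>V. 0 \<le> Cv v" and "\<forall>e\<in>E. 0 \<le> Ce e"
  using assms by (auto simp: vc_cut_def cut_val_def)

lemma vc_cut_size_nonneg:
  assumes "vc_cut H V E Cv Ce"
  shows "0 \<le> vc_cut_size V E uv ue Cv Ce"
  unfolding vc_cut_size_def using vc_cut_nonneg[OF assms]
  by (intro add_nonneg_nonneg sum_nonneg mult_nonneg_nonneg) auto

lemma ec_cut_nonneg: "ec_cut H V E C \<Longrightarrow> \<forall>x\<in>ec_arcs V E. 0 \<le> C x"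
  by (auto simp: ec_cut_def cut_val_def)

lemma ec_cut_size_nonneg:
  assumes "ec_cut H V E C"
  shows "0 \<le> ec_cut_size V E uv ue C"
  unfolding ec_cut_size_def using ec_cut_nonneg[OF assms]
  by (intro sum_nonneg mult_nonneg_nonneg) auto

definition vertex_arcs :: "'v \<Rightarrow> (('v \<times> tag) \<times> ('v \<times> tag)) set" where
  "vertex_arcs v = {((v, In), (v, Mid)), ((v, Mid), (v, Out)), ((v, In), (v, Out))}"

definition edge_arcs :: "'v set \<Rightarrow> (('v \<times> tag) \<times> ('v \<times> tag)) set" where
  "edge_arcs e = {((a, Out), (b, In)) | a b. {a, b} = e \<and> a \<noteq> b}"

lemma finite_vertex_arcs [simp]: "finite (vertex_arcs v)"
  and vertex_arcs_not_empty [simp]: "vertex_arcs v \<noteq> {}"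
  by (simp_all add: vertex_arcs_def)

lemma edge_arcs_doubleton: "a \<noteq> b \<Longrightarrow> edge_arcs {a, b} = {((a, Out), (b, In)), ((b, Out), (a, In))}"
  unfolding edge_arcs_def by (auto simp: doubleton_eq_iff)

lemma ec_arcs_eq_Union: "ec_arcs V E = (\<Union>v\<in>V. vertex_arcs v) \<union> (\<Union>e\<in>E. edge_arcs e)"
  unfolding ec_arcs_def vertex_arcs_def edge_arcs_def by blast

lemma vertex_arcs_subset: "v \<in> V \<Longrightarrow> vertex_arcs v \<subseteq> ec_arcs V E"
  unfolding ec_arcs_eq_Union by blast

lemma edge_arcs_subset: "e \<in> E \<Longrightarrow> edge_arcs e \<subseteq> ec_arcs V E"
  unfolding ec_arcs_eq_Union by blast

lemma ec_weight_vertex_arcs: "x \<in> vertex_arcs v \<Longrightarrow> ec_weight f g x = f v"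
  by (auto simp: vertex_arcs_def)

lemma ec_weight_edge_arcs: "x \<in> edge_arcs e \<Longrightarrow> ec_weight f g x = g e"
  by (auto simp: edge_arcs_def)

lemma ec_cut_size_decompose:
  assumes "finite V" and edges: "\<forall>e\<in>E. \<exists>a b. a \<in> V \<and> b \<in> V \<and> a \<noteq> b \<and> e = {a, b}"
  shows "ec_cut_size V E uv ue C =
    (\<Sum>v\<in>V. real (uv v) * sum C (vertex_arcs v)) + (\<Sum>e\<in>E. real (ue e) * sum C (edge_arcs e))"
proof -
  define f where "f x = real (ec_weight uv ue x) * C x" for x
  have fin_E: "finite E"
    using edges by (intro finite_subset[of E "Pow V"]) (auto simp: \<open>finite V\<close>)
  have fin_arcs: "e \<in> E \<Longrightarrow> finite (edge_arcs e)" for e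
    using edges by (auto simp: edge_arcs_doubleton)
  have "ec_cut_size V E uv ue C = sum f (\<Union>v\<in>V. vertex_arcs v) + sum f (\<Union>e\<in>E. edge_arcs e)"
    unfolding ec_cut_size_def ec_arcs_eq_Union f_def[symmetric]
    using \<open>finite V\<close> fin_E fin_arcs by (intro sum.union_disjoint) (auto simp: vertex_arcs_def edge_arcs_def)
  also have "sum f (\<Union>v\<in>V. vertex_arcs v) = (\<Sum>v\<in>V. sum f (vertex_arcs v))"
    using \<open>finite V\<close> fin_arcs by (intro sum.UNION_disjoint) (auto simp: vertex_arcs_def)
  also have "sum f (\<Union>e\<in>E. edge_arcs e) = (\<Sum>e\<in>E. sum f (edge_arcs e))"
    using fin_E fin_arcs by (intro sum.UNION_disjoint) (auto simp: edge_arcs_def)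
  also have "(\<Sum>v\<in>V. sum f (vertex_arcs v)) = (\<Sum>v\<in>V. real (uv v) * sum C (vertex_arcs v))"
    unfolding sum_distrib_left f_def by (intro sum.cong refl) (simp add: ec_weight_vertex_arcs)
  also have "(\<Sum>e\<in>E. sum f (edge_arcs e)) = (\<Sum>e\<in>E. real (ue e) * sum C (edge_arcs e))"
    unfolding sum_distrib_left f_def by (intro sum.cong refl) (simp add: ec_weight_edge_arcs)
  finally show ?thesis .
qed

lemma ec_cut_ec_weight: "vc_cut H V E Cv Ce \<Longrightarrow> ec_cut H V E (ec_weight Cv Ce)"
  unfolding ec_cut_def vc_cut_def ec_arcs_def by (auto simp: insert_commute)

lemma ec_cut_size_ec_weight_le:
  assumes "finite V" and edges: "\<forall>e\<in>E. \<exists>a b. a \<in> V \<and> b \<in> V \<and> a \<noteq> b \<and> e = {a, b}"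
    and "\<forall>e\<in>E. 0 \<le> Ce e"
  shows "ec_cut_size V E uv ue (ec_weight Cv Ce) \<le> 3 * vc_cut_size V E uv ue Cv Ce"
proof -
  have "sum (ec_weight Cv Ce) (vertex_arcs v) = 3 * Cv v" for v
    by (simp add: vertex_arcs_def)
  moreover have "sum (ec_weight Cv Ce) (edge_arcs e) = 2 * Ce e" if "e \<in> E" for e
    using edges that by (auto simp: edge_arcs_doubleton insert_commute)
  ultimately have "ec_cut_size V E uv ue (ec_weight Cv Ce)
      = (\<Sum>v\<in>V. real (uv v) * (3 * Cv v)) + (\<Sum>e\<in>E. real (ue e) * (2 * Ce e))"
    by (simp add: ec_cut_size_decompose[OF assms(1,2)])
  also have "\<dots> \<le> (\<Sum>v\<in>V. 3 * (real (uv v) * Cv v)) + (\<Sum>e\<in>E. 3 * (real (ue e) * Ce e))"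
    using assms(3) by (intro add_mono sum_mono) (simp_all add: mult_left_mono)
  finally show ?thesis
    by (simp add: vc_cut_size_def sum_distrib_left)
qed

definition induced_vertex_cut :: "(('v \<times> tag) \<times> ('v \<times> tag) \<Rightarrow> real) \<Rightarrow> 'v \<Rightarrow> real" where
  "induced_vertex_cut C v = Max (C ` vertex_arcs v)"

definition induced_edge_cut :: "(('v \<times> tag) \<times> ('v \<times> tag) \<Rightarrow> real) \<Rightarrow> 'v set \<Rightarrow> real" where
  "induced_edge_cut C e = Max (C ` edge_arcs e)"

lemma le_ec_weight_induced_cut:
  assumes "x \<in> ec_arcs V E"
  shows "C x \<le> ec_weight (induced_vertex_cut C) (induced_edge_cut C) x"
  using assms unfolding ec_arcs_eq_Union
proof (elim UnE UN_E)
  fix v assume "x \<in> vertex_arcs v"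
  then show ?thesis
    by (simp add: ec_weight_vertex_arcs induced_vertex_cut_def)
next
  fix e assume x: "x \<in> edge_arcs e"
  then obtain a b where "a \<noteq> b" "e = {a, b}"
    by (auto simp: edge_arcs_def)
  then have "finite (edge_arcs e)"
    by (simp add: edge_arcs_doubleton)
  with x show ?thesis
    by (simp add: ec_weight_edge_arcs induced_edge_cut_def)
qed

lemma cut_length_le_induced_cut_length:
  assumes "x \<in> ec_arcs V E" and "0 \<le> c"
  shows "real (ec_weight lv le x) + c * C x
    \<le> ec_weight (\<lambda>v. real (lv v) + c * induced_vertex_cut C v) (\<lambda>e. real (le e) + c * induced_edge_cut C e) x"
  using le_ec_weight_induced_cut[OF assms(1), of C] assms(2) by (simp add: ec_weight_cut_length mult_left_mono)

lemma vc_cut_induced_cut: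
  assumes "ec_cut H V E C" and edges: "\<forall>e\<in>E. \<exists>a b. a \<in> V \<and> b \<in> V \<and> a \<noteq> b \<and> e = {a, b}"
  shows "vc_cut H V E (induced_vertex_cut C) (induced_edge_cut C)"
proof -
  have "cut_val H (Max (C ` A))" if "A \<subseteq> ec_arcs V E" "finite A" "A \<noteq> {}" for A
  proof -
    have "Max (C ` A) \<in> C ` A"
      using that by (intro Max_in) auto
    then show ?thesis
      using that(1) assms(1) by (auto simp: ec_cut_def)
  qed
  moreover have "finite (edge_arcs e)" "edge_arcs e \<noteq> {}" if "e \<in> E" for e
    using that edges by (auto simp: edge_arcs_doubleton)
  ultimately show ?thesis
    unfolding vc_cut_def induced_vertex_cut_def induced_edge_cut_def
    by (simp add: vertex_arcs_subset edge_arcs_subset)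
qed

lemma Max_image_le_sum:
  fixes f :: "'a \<Rightarrow> 'b :: linordered_semidom"
  assumes "finite A" and "A \<noteq> {}" and "\<And>x. x \<in> A \<Longrightarrow> 0 \<le> f x"
  shows "Max (f ` A) \<le> sum f A"
proof -
  have "Max (f ` A) \<in> f ` A"
    using assms(1,2) by (intro Max_in) auto
  then obtain x where "x \<in> A" "Max (f ` A) = f x"
    by auto
  moreover have "f x \<le> sum f A"
    using \<open>x \<in> A\<close> assms(1,3) by (intro member_le_sum) auto
  ultimately show ?thesis
    by simp
qed

lemma vc_cut_size_induced_cut_le:
  assumes "finite V" and edges: "\<forall>e\<in>E. \<exists>a b. a \<in> V \<and> b \<in> V \<and> a \<noteq> b \<and> e = {a, b}"
    and C_nonneg: "\<forall>x\<in>ec_arcs V E. 0 \<le> C x"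
  shows "vc_cut_size V E uv ue (induced_vertex_cut C) (induced_edge_cut C) \<le> ec_cut_size V E uv ue C"
proof -
  have "induced_vertex_cut C v \<le> sum C (vertex_arcs v)" if "v \<in> V" for v
    unfolding induced_vertex_cut_def using that C_nonneg vertex_arcs_subset[OF that]
    by (intro Max_image_le_sum) (auto simp: vertex_arcs_def)
  moreover have "induced_edge_cut C e \<le> sum C (edge_arcs e)" if "e \<in> E" for e
    unfolding induced_edge_cut_def using that edges C_nonneg edge_arcs_subset[OF that]
    by (intro Max_image_le_sum) (auto simp: edge_arcs_doubleton)
  ultimately show ?thesis
    unfolding vc_cut_size_def ec_cut_size_decompose[OF assms(1,2)]
    by (intro add_mono sum_mono mult_left_mono) auto
qed

section \<open>Demands and separation\<close>

lemma sum_ec_vertices_Mid: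
  assumes "finite V" and "\<And>x. snd x \<noteq> Mid \<Longrightarrow> f x = 0"
  shows "sum f (ec_vertices V) = (\<Sum>v\<in>V. f (v, Mid))"
proof -
  have "sum f (ec_vertices V) = (\<Sum>v\<in>V. \<Sum>t\<in>{In, Mid, Out}. f (v, t))"
    unfolding ec_vertices_def UNIV_tag by (rule sum.cartesian_product')
  also have "\<dots> = (\<Sum>v\<in>V. f (v, Mid))"
    using assms(2) by simp
  finally show ?thesis .
qed

lemma demand_ok_nonneg: "demand_ok W d A h D \<Longrightarrow> 0 \<le> D v w"
  by (simp add: demand_ok_def)

definition mid_demand :: "('v \<Rightarrow> 'v \<Rightarrow> real) \<Rightarrow> 'v \<times> tag \<Rightarrow> 'v \<times> tag \<Rightarrow> real" where
  "mid_demand D x y = (if snd x = Mid \<and> snd y = Mid then D (fst x) (fst y) else 0)"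

lemma mid_demand_Mid [simp]: "mid_demand D (v, Mid) (w, Mid) = D v w"
  by (simp add: mid_demand_def)

lemma symmetric_mid_demand: "symmetric_demand D \<Longrightarrow> symmetric_demand (mid_demand D)"
  by (simp add: symmetric_demand_def mid_demand_def)

lemma mid_demand_row_sum:
  "finite V \<Longrightarrow> (\<Sum>y\<in>ec_vertices V. mid_demand D (v, Mid) y) = (\<Sum>w\<in>V. D v w)"
  by (subst sum_ec_vertices_Mid) (auto simp: mid_demand_def)

lemma mid_demand_column_sum:
  "finite V \<Longrightarrow> (\<Sum>y\<in>ec_vertices V. mid_demand D y (v, Mid)) = (\<Sum>w\<in>V. D w v)"
  by (subst sum_ec_vertices_Mid) (auto simp: mid_demand_def)

lemma demand_ok_mid_demand:
  assumes D: "demand_ok V d A h D" and "finite V"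
    and d'_le: "\<And>v w. v \<in> V \<Longrightarrow> w \<in> V \<Longrightarrow> d' (v, Mid) (w, Mid) \<le> d v w"
  shows "demand_ok (ec_vertices V) d' (ec_A A) h (mid_demand D)"
  unfolding demand_ok_def
proof (intro conjI allI impI ballI)
  fix x y
  show "0 \<le> mid_demand D x y"
    using demand_ok_nonneg[OF D] by (simp add: mid_demand_def)
  show "mid_demand D x y = 0" if "x \<notin> ec_vertices V \<or> y \<notin> ec_vertices V"
    using D that by (cases x, cases y) (simp add: demand_ok_def mid_demand_def)
  show "d' x y \<le> ereal (real h)" if "0 < mid_demand D x y"
  proof -
    obtain v t w t' where xy: "x = (v, t)" "y = (w, t')"
      by (cases x, cases y)
    with that have "t = Mid" "t' = Mid" "0 < D v w"
      by (auto simp: mid_demand_def split: if_splits)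
    then have "v \<in> V" "w \<in> V" "d v w \<le> ereal (real h)"
      using D unfolding demand_ok_def by (metis less_irrefl)+
    then show ?thesis
      using xy \<open>t = Mid\<close> \<open>t' = Mid\<close> d'_le order_trans by blast
  qed
next
  fix x assume "x \<in> ec_vertices V"
  then obtain v t where x: "x = (v, t)" "v \<in> V"
    by (cases x) simp
  show "max (\<Sum>y\<in>ec_vertices V. mid_demand D x y) (\<Sum>y\<in>ec_vertices V. mid_demand D y x) \<le> ec_A A x"
  proof (cases "t = Mid")
    case True
    then show ?thesis
      using D x \<open>finite V\<close> by (simp add: demand_ok_def ec_A_def mid_demand_row_sum mid_demand_column_sum)
  next
    case False
    then show ?thesis
      using x by (simp add: ec_A_def mid_demand_def)
  qed
qed

lemma demand_ok_of_mid_demand: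
  assumes D: "demand_ok (ec_vertices V) d' (ec_A A) h (mid_demand D)" and "finite V"
    and d_le: "\<And>v w. v \<in> V \<Longrightarrow> w \<in> V \<Longrightarrow> d v w \<le> d' (v, Mid) (w, Mid)"
  shows "demand_ok V d A h D"
  unfolding demand_ok_def
proof (intro conjI allI impI ballI)
  fix v w
  show "0 \<le> D v w"
    using demand_ok_nonneg[OF D, of "(v, Mid)" "(w, Mid)"] by simp
  show "D v w = 0" if "v \<notin> V \<or> w \<notin> V"
    using D that unfolding demand_ok_def by (metis mid_demand_Mid ec_vertices_iff)
  show "d v w \<le> ereal (real h)" if "0 < D v w"
  proof -
    have "v \<in> V" "w \<in> V" "d' (v, Mid) (w, Mid) \<le> ereal (real h)"
      using D that unfolding demand_ok_def by (metis mid_demand_Mid ec_vertices_iff less_irrefl)+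
    then show ?thesis
      using d_le order_trans by blast
  qed
next
  fix v assume "v \<in> V"
  then have "max (\<Sum>y\<in>ec_vertices V. mid_demand D (v, Mid) y) (\<Sum>y\<in>ec_vertices V. mid_demand D y (v, Mid))
      \<le> ec_A A (v, Mid)"
    using D by (simp add: demand_ok_def)
  then show "max (\<Sum>w\<in>V. D v w) (\<Sum>w\<in>V. D w v) \<le> A v"
    using \<open>finite V\<close> by (simp add: ec_A_def mid_demand_row_sum mid_demand_column_sum)
qed

lemma demand_ok_symmetric_eq_mid_demand:
  assumes D: "demand_ok (ec_vertices V) d (ec_A A) h D" and sym: "symmetric_demand D" and "finite V"
  shows "D = mid_demand (\<lambda>v w. D (v, Mid) (w, Mid))"
proof -
  have D_nonneg: "0 \<le> D x y" for x y
    using D by (rule demand_ok_nonneg)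
  \<comment> \<open>\<open>ec_A A\<close> vanishes off the \<open>Mid\<close> copies, which forces zero rows there; symmetry gives zero columns.\<close>
  have zero: "D x y = 0" if "snd x \<noteq> Mid" for x y
  proof (cases "x \<in> ec_vertices V \<and> y \<in> ec_vertices V")
    case True
    then have "(\<Sum>z\<in>ec_vertices V. D x z) \<le> 0"
      using D that by (auto simp: demand_ok_def ec_A_def)
    then have "\<forall>z\<in>ec_vertices V. D x z = 0"
      using D_nonneg finite_ec_vertices[OF \<open>finite V\<close>]
      by (metis antisym sum_nonneg sum_nonneg_eq_0_iff)
    then show ?thesis
      using True by blast
  next
    case False
    then show ?thesis
      using D unfolding demand_ok_def by blast
  qed
  have "D x y = mid_demand (\<lambda>v w. D (v, Mid) (w, Mid)) x y" for x y
    using zero[of x y] zero[of y x] sym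
    by (cases x, cases y) (auto simp: mid_demand_def symmetric_demand_def)
  then show ?thesis
    by blast
qed

definition symmetrize :: "('w \<Rightarrow> 'w \<Rightarrow> real) \<Rightarrow> 'w \<Rightarrow> 'w \<Rightarrow> real" where
  "symmetrize D v w = (D v w + D w v) / 2"

lemma symmetric_symmetrize: "symmetric_demand (symmetrize D)"
  by (simp add: symmetric_demand_def symmetrize_def)

lemma demand_ok_symmetrize:
  assumes D: "demand_ok W d A h D" and d_commute: "\<And>v w. d v w = d w v"
  shows "demand_ok W d A h (symmetrize D)"
  unfolding demand_ok_def
proof (intro conjI allI impI ballI)
  fix v w
  show "0 \<le> symmetrize D v w"
    using demand_ok_nonneg[OF D] by (simp add: symmetrize_def)
  show "symmetrize D v w = 0" if "v \<notin> W \<or> w \<notin> W"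
    using D that by (auto simp: demand_ok_def symmetrize_def)
  show "d v w \<le> ereal (real h)" if "0 < symmetrize D v w"
  proof -
    have "0 < D v w \<or> 0 < D w v"
      using that unfolding symmetrize_def by (cases "0 < D v w") auto
    moreover have "d a b \<le> ereal (real h)" if "0 < D a b" for a b
      using D that by (simp add: demand_ok_def)
    ultimately show ?thesis
      using d_commute by metis
  qed
next
  fix v assume "v \<in> W"
  then have "(\<Sum>w\<in>W. D v w) \<le> A v" "(\<Sum>w\<in>W. D w v) \<le> A v"
    using D by (auto simp: demand_ok_def)
  moreover have "(\<Sum>w\<in>W. symmetrize D v w) = ((\<Sum>w\<in>W. D v w) + (\<Sum>w\<in>W. D w v)) / 2"
    and "(\<Sum>w\<in>W. symmetrize D w v) = ((\<Sum>w\<in>W. D v w) + (\<Sum>w\<in>W. D w v)) / 2"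
    by (simp_all add: symmetrize_def sum.distrib flip: sum_divide_distrib)
  ultimately show "max (\<Sum>w\<in>W. symmetrize D v w) (\<Sum>w\<in>W. symmetrize D w v) \<le> A v"
    by simp
qed

lemma sum_product_swap: "(\<Sum>p\<in>W \<times> W. g (snd p) (fst p)) = (\<Sum>p\<in>W \<times> W. g (fst p) (snd p))"
proof -
  have "(\<Sum>p\<in>W \<times> W. g (snd p) (fst p)) = (\<Sum>x\<in>W. \<Sum>y\<in>W. g y x)"
    by (simp add: sum.cartesian_product')
  also have "\<dots> = (\<Sum>y\<in>W. \<Sum>x\<in>W. g y x)"
    by (rule sum.swap)
  also have "\<dots> = (\<Sum>p\<in>W \<times> W. g (fst p) (snd p))"
    by (simp add: sum.cartesian_product')
  finally show ?thesis .
qed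

lemma sep_symmetrize:
  assumes d_commute: "\<And>v w. d v w = d w v"
  shows "sep W d h' (symmetrize D) = sep W d h' D"
proof -
  define g where "g v w = (if ereal (real h') < d v w then D v w else 0)" for v w
  have "sep W d h' (symmetrize D) = (\<Sum>p\<in>W \<times> W. (g (fst p) (snd p) + g (snd p) (fst p)) / 2)"
    unfolding sep_def g_def symmetrize_def using d_commute by (intro sum.cong refl) auto
  also have "\<dots> = ((\<Sum>p\<in>W \<times> W. g (fst p) (snd p)) + (\<Sum>p\<in>W \<times> W. g (snd p) (fst p))) / 2"
    by (simp add: sum.distrib flip: sum_divide_distrib)
  also have "\<dots> = sep W d h' D"
    unfolding sum_product_swap by (simp add: sep_def g_def)
  finally show ?thesis .
qed

lemma sep_nonneg: "(\<And>v w. 0 \<le> D v w) \<Longrightarrow> 0 \<le> sep W d h' D"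
  unfolding sep_def by (intro sum_nonneg) auto

lemma sep_mono:
  assumes "\<And>v w. 0 \<le> D v w" and "\<And>v w. v \<in> W \<Longrightarrow> w \<in> W \<Longrightarrow> d v w \<le> d' v w"
  shows "sep W d h' D \<le> sep W d' h' D"
  unfolding sep_def
proof (intro sum_mono)
  fix p assume "p \<in> W \<times> W"
  then have "d (fst p) (snd p) \<le> d' (fst p) (snd p)"
    using assms(2) by auto
  then show "(if ereal (real h') < d (fst p) (snd p) then D (fst p) (snd p) else 0)
      \<le> (if ereal (real h') < d' (fst p) (snd p) then D (fst p) (snd p) else 0)"
    using assms(1) by (auto dest: order.strict_trans2)
qed

lemma sep_cong:
  "(\<And>v w. v \<in> W \<Longrightarrow> w \<in> W \<Longrightarrow> d v w = d' v w) \<Longrightarrow> sep W d h' D = sep W d' h' D"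
  unfolding sep_def by (intro sum.cong) auto

lemma sep_mid_demand:
  assumes "finite V"
  shows "sep (ec_vertices V) d h' (mid_demand D) = sep V (\<lambda>v w. d (v, Mid) (w, Mid)) h' D"
proof -
  let ?g = "\<lambda>x y. if ereal (real h') < d x y then mid_demand D x y else 0"
  have "sep (ec_vertices V) d h' (mid_demand D) = (\<Sum>x\<in>ec_vertices V. \<Sum>y\<in>ec_vertices V. ?g x y)"
    unfolding sep_def sum.cartesian_product' fst_conv snd_conv ..
  also have "\<dots> = (\<Sum>x\<in>ec_vertices V. \<Sum>w\<in>V. ?g x (w, Mid))"
    using assms by (intro sum.cong refl sum_ec_vertices_Mid) (simp_all add: mid_demand_def cong: if_cong)
  also have "\<dots> = (\<Sum>v\<in>V. \<Sum>w\<in>V. ?g (v, Mid) (w, Mid))"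
    using assms by (intro sum_ec_vertices_Mid) (simp_all add: mid_demand_def cong: if_cong)
  also have "\<dots> = sep V (\<lambda>v w. d (v, Mid) (w, Mid)) h' D"
    unfolding sep_def sum.cartesian_product' fst_conv snd_conv mid_demand_Mid ..
  finally show ?thesis .
qed

lemma demand_ok_lift:
  assumes "finite V" and "\<forall>a\<in>V. 0 \<le> Lv a"
    and D: "demand_ok V (vc_dist V E Lv Le) A h D"
  shows "demand_ok (ec_vertices V) (di_dist (ec_vertices V) (ec_arcs V E) (ec_weight Lv Le)) (ec_A A) h
    (mid_demand (symmetrize D))"
proof (rule demand_ok_mid_demand[OF demand_ok_symmetrize[OF D vc_dist_commute] \<open>finite V\<close>])
  show "di_dist (ec_vertices V) (ec_arcs V E) (ec_weight Lv Le) (v, Mid) (w, Mid) \<le> vc_dist V E Lv Le v w"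
    if "v \<in> V" for v w
    using that assms(2) by (rule di_dist_Mid_le_vc_dist) simp
qed

lemma sep_lift:
  assumes "finite V" and "\<forall>a\<in>V. 0 \<le> Lv a" and "\<forall>e\<in>E. 0 \<le> Le e"
  shows "sep (ec_vertices V) (di_dist (ec_vertices V) (ec_arcs V E) (ec_weight Lv Le)) h' (mid_demand (symmetrize D))
    = sep V (vc_dist V E Lv Le) h' D"
proof -
  have "sep (ec_vertices V) (di_dist (ec_vertices V) (ec_arcs V E) (ec_weight Lv Le)) h' (mid_demand (symmetrize D))
      = sep V (\<lambda>v w. di_dist (ec_vertices V) (ec_arcs V E) (ec_weight Lv Le) (v, Mid) (w, Mid)) h' (symmetrize D)"
    by (rule sep_mid_demand[OF \<open>finite V\<close>])
  also have "\<dots> = sep V (vc_dist V E Lv Le) h' (symmetrize D)"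
    using assms(2,3) by (intro sep_cong di_dist_Mid_eq_vc_dist)
  also have "\<dots> = sep V (vc_dist V E Lv Le) h' D"
    by (intro sep_symmetrize vc_dist_commute)
  finally show ?thesis .
qed

lemma demand_ok_project:
  assumes "finite V" and "\<forall>a\<in>V. 0 \<le> Lv a" and "\<forall>e\<in>E. 0 \<le> Le e"
    and D': "demand_ok (ec_vertices V) (di_dist (ec_vertices V) (ec_arcs V E) (ec_weight Lv Le)) (ec_A A) h D'"
    and "symmetric_demand D'"
  shows "D' = mid_demand (\<lambda>v w. D' (v, Mid) (w, Mid))"
    and "demand_ok V (vc_dist V E Lv Le) A h (\<lambda>v w. D' (v, Mid) (w, Mid))"
proof -
  show D'_eq: "D' = mid_demand (\<lambda>v w. D' (v, Mid) (w, Mid))"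
    using D' \<open>symmetric_demand D'\<close> \<open>finite V\<close> by (rule demand_ok_symmetric_eq_mid_demand)
  have "demand_ok (ec_vertices V) (di_dist (ec_vertices V) (ec_arcs V E) (ec_weight Lv Le)) (ec_A A) h
      (mid_demand (\<lambda>v w. D' (v, Mid) (w, Mid)))"
    unfolding D'_eq[symmetric] by (rule D')
  moreover have "vc_dist V E Lv Le v w \<le> di_dist (ec_vertices V) (ec_arcs V E) (ec_weight Lv Le) (v, Mid) (w, Mid)"
    for v w
    using assms(2,3) by (intro vc_dist_le_di_dist_Mid) auto
  ultimately show "demand_ok V (vc_dist V E Lv Le) A h (\<lambda>v w. D' (v, Mid) (w, Mid))"
    using demand_ok_of_mid_demand \<open>finite V\<close> by blast
qed

lemma sep_project:
  assumes "finite V" and "\<forall>a\<in>V. 0 \<le> Lv a"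
    and "\<And>x. x \<in> ec_arcs V E \<Longrightarrow> len x \<le> ec_weight Lv Le x" and "\<And>v w. 0 \<le> D v w"
  shows "sep (ec_vertices V) (di_dist (ec_vertices V) (ec_arcs V E) len) h' (mid_demand D)
    \<le> sep V (vc_dist V E Lv Le) h' D"
proof -
  have "sep (ec_vertices V) (di_dist (ec_vertices V) (ec_arcs V E) len) h' (mid_demand D)
      = sep V (\<lambda>v w. di_dist (ec_vertices V) (ec_arcs V E) len (v, Mid) (w, Mid)) h' D"
    by (rule sep_mid_demand[OF \<open>finite V\<close>])
  also have "\<dots> \<le> sep V (vc_dist V E Lv Le) h' D"
    using assms(2-4) by (intro sep_mono di_dist_Mid_le_vc_dist)
  finally show ?thesis .
qed

section \<open>Transferring sparse cuts\<close>

lemma spars_val_less_scaled: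
  assumes "spars_val c s < ereal \<phi>" and "0 \<le> s" and "s \<le> s'"
    and "0 \<le> c'" and "c' \<le> k * c" and "0 < k"
  shows "spars_val c' s' < ereal (k * \<phi>)"
proof -
  have "0 < s" and ratio: "c / s < \<phi>"
    using assms(1,2) by (auto simp: spars_val_def split: if_splits)
  then have "c' / s' \<le> c' / s"
    using assms(3,4) by (intro divide_left_mono) auto
  also have "\<dots> \<le> k * c / s"
    using \<open>0 < s\<close> assms(5) by (intro divide_right_mono) auto
  also have "\<dots> < k * \<phi>"
    using mult_strict_left_mono[OF ratio assms(6)] by simp
  finally show ?thesis
    using \<open>0 < s\<close> assms(3) by (simp add: spars_val_def)
qed

lemma ec_spars_ec_weight_less:
  assumes G: "vc_graph V E lv le uv ue A" and cut: "vc_cut (h * s) V E Cv Ce"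
    and sparse: "vc_spars h s V E lv le uv ue Cv Ce A < ereal \<phi>"
  shows "ec_spars h s V E lv le uv ue (ec_weight Cv Ce) A < ereal (3 * \<phi>)"
proof -
  define H where "H = h * s"
  define Lv where "Lv = (\<lambda>c v. real (lv v) + c * Cv v)"
  define Le where "Le = (\<lambda>c e. real (le e) + c * Ce e)"
  have "finite V" and edges: "\<forall>e\<in>E. \<exists>a b. a \<in> V \<and> b \<in> V \<and> a \<noteq> b \<and> e = {a, b}"
    using G by (auto simp: vc_graph_def)
  have len_nonneg: "\<forall>v\<in>V. 0 \<le> Lv c v" "\<forall>e\<in>E. 0 \<le> Le c e" if "0 \<le> c" for c
    using that vc_cut_nonneg[OF cut] by (simp_all add: Lv_def Le_def)
  have lengths0: "(\<lambda>x. real (ec_weight lv le x)) = ec_weight (Lv 0) (Le 0)"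
    and lengths: "(\<lambda>x. real (ec_weight lv le x) + real H * ec_weight Cv Ce x) = ec_weight (Lv (real H)) (Le (real H))"
    by (simp_all add: fun_eq_iff Lv_def Le_def ec_weight_cut_length ec_weight_def)
  obtain D where D: "demand_ok V (vc_dist V E (Lv 0) (Le 0)) A h D"
    and sparse_D: "spars_val (vc_cut_size V E uv ue Cv Ce) (sep V (vc_dist V E (Lv (real H)) (Le (real H))) H D) < ereal \<phi>"
    using sparse unfolding vc_spars_def Let_def INF_less_iff Lv_def Le_def H_def by auto
  have "ec_spars h s V E lv le uv ue (ec_weight Cv Ce) A
      \<le> spars_val (ec_cut_size V E uv ue (ec_weight Cv Ce))
          (sep (ec_vertices V) (di_dist (ec_vertices V) (ec_arcs V E) (ec_weight (Lv (real H)) (Le (real H)))) H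
            (mid_demand (symmetrize D)))"
    using demand_ok_lift[OF \<open>finite V\<close> len_nonneg(1) D]
    unfolding ec_spars_def Let_def H_def[symmetric] lengths0 lengths
    by (intro INF_lower) (simp add: symmetric_mid_demand symmetric_symmetrize)
  also have "\<dots> < ereal (3 * \<phi>)"
  proof (rule spars_val_less_scaled[OF sparse_D])
    show "0 \<le> sep V (vc_dist V E (Lv (real H)) (Le (real H))) H D"
      using D by (intro sep_nonneg demand_ok_nonneg)
    show "sep V (vc_dist V E (Lv (real H)) (Le (real H))) H D
        \<le> sep (ec_vertices V) (di_dist (ec_vertices V) (ec_arcs V E) (ec_weight (Lv (real H)) (Le (real H)))) H
            (mid_demand (symmetrize D))"
      using sep_lift[OF \<open>finite V\<close> len_nonneg] by simp
    show "0 \<le> ec_cut_size V E uv ue (ec_weight Cv Ce)"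
      by (rule ec_cut_size_nonneg[OF ec_cut_ec_weight[OF cut]])
    show "ec_cut_size V E uv ue (ec_weight Cv Ce) \<le> 3 * vc_cut_size V E uv ue Cv Ce"
      by (rule ec_cut_size_ec_weight_le[OF \<open>finite V\<close> edges vc_cut_nonneg(2)[OF cut]])
  qed simp
  finally show ?thesis .
qed

lemma vc_spars_induced_cut_less:
  assumes G: "vc_graph V E lv le uv ue A" and cut: "ec_cut (h * s) V E C"
    and sparse: "ec_spars h s V E lv le uv ue C A < ereal \<phi>"
  shows "vc_spars h s V E lv le uv ue (induced_vertex_cut C) (induced_edge_cut C) A < ereal \<phi>"
proof -
  define H where "H = h * s"
  define Cv where "Cv = induced_vertex_cut C"
  define Ce where "Ce = induced_edge_cut C"
  define Lv where "Lv = (\<lambda>c v. real (lv v) + c * Cv v)"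
  define Le where "Le = (\<lambda>c e. real (le e) + c * Ce e)"
  have "finite V" and edges: "\<forall>e\<in>E. \<exists>a b. a \<in> V \<and> b \<in> V \<and> a \<noteq> b \<and> e = {a, b}"
    using G by (auto simp: vc_graph_def)
  have vcut: "vc_cut (h * s) V E Cv Ce"
    unfolding Cv_def Ce_def by (rule vc_cut_induced_cut[OF cut edges])
  have len_nonneg: "\<forall>v\<in>V. 0 \<le> Lv c v" "\<forall>e\<in>E. 0 \<le> Le c e" if "0 \<le> c" for c
    using that vc_cut_nonneg[OF vcut] by (simp_all add: Lv_def Le_def)
  have lengths0: "(\<lambda>x. real (ec_weight lv le x)) = ec_weight (Lv 0) (Le 0)"
    by (simp add: fun_eq_iff Lv_def Le_def ec_weight_def)
  obtain D' where D': "demand_ok (ec_vertices V) (di_dist (ec_vertices V) (ec_arcs V E) (ec_weight (Lv 0) (Le 0)))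
        (ec_A A) h D'"
    and "symmetric_demand D'"
    and sparse_D': "spars_val (ec_cut_size V E uv ue C)
      (sep (ec_vertices V) (di_dist (ec_vertices V) (ec_arcs V E) (\<lambda>x. real (ec_weight lv le x) + real H * C x)) H D')
      < ereal \<phi>"
    using sparse unfolding ec_spars_def Let_def INF_less_iff H_def lengths0 by auto
  define D where "D = (\<lambda>v w. D' (v, Mid) (w, Mid))"
  have D'_eq: "D' = mid_demand D"
    and D: "demand_ok V (vc_dist V E (Lv 0) (Le 0)) A h D"
    unfolding D_def using demand_ok_project[OF \<open>finite V\<close> len_nonneg D' \<open>symmetric_demand D'\<close>] by simp_all
  have "vc_spars h s V E lv le uv ue Cv Ce A
      \<le> spars_val (vc_cut_size V E uv ue Cv Ce) (sep V (vc_dist V E (Lv (real H)) (Le (real H))) H D)"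
    using D unfolding vc_spars_def Let_def H_def Lv_def Le_def by (intro INF_lower) simp
  also have "\<dots> < ereal (1 * \<phi>)"
  proof (rule spars_val_less_scaled[OF sparse_D'])
    show "0 \<le> sep (ec_vertices V) (di_dist (ec_vertices V) (ec_arcs V E) (\<lambda>x. real (ec_weight lv le x) + real H * C x)) H D'"
      using D' by (intro sep_nonneg demand_ok_nonneg)
    have "real (ec_weight lv le x) + real H * C x \<le> ec_weight (Lv (real H)) (Le (real H)) x"
      if "x \<in> ec_arcs V E" for x
      using cut_length_le_induced_cut_length[OF that] by (simp add: Lv_def Le_def Cv_def Ce_def)
    then show "sep (ec_vertices V) (di_dist (ec_vertices V) (ec_arcs V E) (\<lambda>x. real (ec_weight lv le x) + real H * C x)) H D'
        \<le> sep V (vc_dist V E (Lv (real H)) (Le (real H))) H D"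
      unfolding D'_eq using len_nonneg D by (intro sep_project demand_ok_nonneg \<open>finite V\<close>) auto
    show "0 \<le> vc_cut_size V E uv ue Cv Ce"
      by (rule vc_cut_size_nonneg[OF vcut])
    show "vc_cut_size V E uv ue Cv Ce \<le> 1 * ec_cut_size V E uv ue C"
      unfolding Cv_def Ce_def using vc_cut_size_induced_cut_le[OF \<open>finite V\<close> edges ec_cut_nonneg[OF cut]] by simp
  qed simp
  finally show ?thesis
    by (simp add: Cv_def Ce_def)
qed

theorem lemma4p8:
  fixes V :: "'v set" and E :: "'v set set"
    and lv uv :: "'v \<Rightarrow> nat" and le ue :: "'v set \<Rightarrow> nat"
    and A :: "'v \<Rightarrow> real" and h s :: nat and \<phi> :: real
  assumes "vc_graph V E lv le uv ue A" and "0 < h" and "0 < s"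
  shows "((\<exists>Cv Ce. vc_cut (h * s) V E Cv Ce \<and> vc_spars h s V E lv le uv ue Cv Ce A < ereal \<phi>)
            \<longrightarrow> (\<exists>C'. ec_cut (h * s) V E C' \<and> ec_spars h s V E lv le uv ue C' A < ereal (3 * \<phi>)))
       \<and> ((\<exists>C'. ec_cut (h * s) V E C' \<and> ec_spars h s V E lv le uv ue C' A < ereal \<phi>)
            \<longrightarrow> (\<exists>Cv Ce. vc_cut (h * s) V E Cv Ce \<and> vc_spars h s V E lv le uv ue Cv Ce A < ereal \<phi>))"
proof (intro conjI impI; elim exE conjE)
  fix Cv Ce
  assume cut: "vc_cut (h * s) V E Cv Ce" and sparse: "vc_spars h s V E lv le uv ue Cv Ce A < ereal \<phi>"
  show "\<exists>C'. ec_cut (h * s) V E C' \<and> ec_spars h s V E lv le uv ue C' A < ereal (3 * \<phi>)"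
    using ec_cut_ec_weight[OF cut] ec_spars_ec_weight_less[OF assms(1) cut sparse] by blast
next
  fix C'
  assume cut: "ec_cut (h * s) V E C'" and sparse: "ec_spars h s V E lv le uv ue C' A < ereal \<phi>"
  have "\<forall>e\<in>E. \<exists>a b. a \<in> V \<and> b \<in> V \<and> a \<noteq> b \<and> e = {a, b}"
    using assms(1) by (simp add: vc_graph_def)
  then show "\<exists>Cv Ce. vc_cut (h * s) V E Cv Ce \<and> vc_spars h s V E lv le uv ue Cv Ce A < ereal \<phi>"
    using vc_cut_induced_cut[OF cut] vc_spars_induced_cut_less[OF assms(1) cut sparse] by blast
qed

end
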